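(* Let $\Gamma$ be a countable discrete group having Property $(T_{\ell_p})$ for some $1<p<\infty$, $p\neq2$. Then $\Gamma$ has Lubotzky's Property $(\tau)$.
   Context: All Banach spaces are complex; $\ell_p=\ell_p(\mathbf N)$, $q$ the conjugate exponent, $\mathbf O(\ell_p)$ the group of linear bijective isometries. An orthogonal representation of $\Gamma$ on $\ell_p$ is a homomorphism $\pi:\Gamma\to\mathbf O(\ell_p)$. A sequence of almost invariant vectors is a sequence of unit vectors $f_n$ with $\|\pi(g)f_n-f_n\|\to0$ for every $g\in\Gamma$. With $\pi^*$ the dual representation on $\ell_q$, $\ell'_p(\pi)$ is the annihilator in $\ell_p$ of the $\pi^*(\Gamma)$-invariant vectors of $\ell_q$. $\Gamma$ has Property $(T_{\ell_p})$ if for no orthogonal representation $\pi$ on $\ell_p$ does $\ell'_p(\pi)$ contain a sequence of almost invariant vectors. $\Gamma$ has Property $(\tau)$ if the trivial representation is not weakly contained in $\bigoplus_{H}\lambda'_{\Gamma/H}$, where $H$ ranges over finite index subgroups of $\Gamma$, $\lambda_{\Gamma/H}$ is the quasi-regular representation on $\ell_2(\Gamma/H)$, and $\lambda'_{\Gamma/H}$ is its restriction to the orthogonal complement of the invariant vectors (i.e. this direct sum has no sequence of almost invariant unit vectors). *)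

theory Defs
  imports "HOL-Analysis.Analysis" "HOL-Algebra.Coset"
begin

definition lp_space :: "real \<Rightarrow> (nat \<Rightarrow> complex) set" where
  "lp_space p = {f. summable (\<lambda>n. cmod (f n) powr p)}"

definition lp_norm :: "real \<Rightarrow> (nat \<Rightarrow> complex) \<Rightarrow> real" where
  "lp_norm p f = (\<Sum>n. cmod (f n) powr p) powr (1 / p)"

definition conj_exp :: "real \<Rightarrow> real" where
  "conj_exp p = p / (p - 1)"

definition lp_pairing :: "(nat \<Rightarrow> complex) \<Rightarrow> (nat \<Rightarrow> complex) \<Rightarrow> complex" where
  "lp_pairing f h = (\<Sum>n. f n * h n)"

definition unit_vec :: "nat \<Rightarrow> nat \<Rightarrow> complex" where
  "unit_vec k = (\<lambda>n. if n = k then 1 else 0)"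

definition lp_isometry :: "real \<Rightarrow> ((nat \<Rightarrow> complex) \<Rightarrow> (nat \<Rightarrow> complex)) \<Rightarrow> bool" where
  "lp_isometry p T \<longleftrightarrow>
     bij_betw T (lp_space p) (lp_space p) \<and>
     (\<forall>f\<in>lp_space p. \<forall>h\<in>lp_space p. \<forall>a b :: complex.
         T (\<lambda>n. a * f n + b * h n) = (\<lambda>n. a * T f n + b * T h n)) \<and>
     (\<forall>f\<in>lp_space p. lp_norm p (T f) = lp_norm p f)"

definition orth_rep ::
  "('g, 'b) monoid_scheme \<Rightarrow> real \<Rightarrow> ('g \<Rightarrow> (nat \<Rightarrow> complex) \<Rightarrow> (nat \<Rightarrow> complex)) \<Rightarrow> bool" where
  "orth_rep G p \<pi> \<longleftrightarrow>
     (\<forall>g\<in>carrier G. lp_isometry p (\<pi> g)) \<and>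
     (\<forall>g\<in>carrier G. \<forall>g'\<in>carrier G. \<forall>f\<in>lp_space p.
         \<pi> (g \<otimes>\<^bsub>G\<^esub> g') f = \<pi> g (\<pi> g' f))"

text \<open>Dual representation on l_q: pi*(g) is the transpose of pi(g^-1) w.r.t. the pairing,
  i.e. its n-th coordinate is the pairing of pi(g^-1) e_n with h.\<close>
definition dual_rep ::
  "('g, 'b) monoid_scheme \<Rightarrow> ('g \<Rightarrow> (nat \<Rightarrow> complex) \<Rightarrow> (nat \<Rightarrow> complex)) \<Rightarrow> 'g \<Rightarrow> (nat \<Rightarrow> complex) \<Rightarrow> (nat \<Rightarrow> complex)" where
  "dual_rep G \<pi> g h = (\<lambda>n. lp_pairing (\<pi> (inv\<^bsub>G\<^esub> g) (unit_vec n)) h)"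

definition lp_prime ::
  "('g, 'b) monoid_scheme \<Rightarrow> real \<Rightarrow> ('g \<Rightarrow> (nat \<Rightarrow> complex) \<Rightarrow> (nat \<Rightarrow> complex)) \<Rightarrow> (nat \<Rightarrow> complex) set" where
  "lp_prime G p \<pi> = {f \<in> lp_space p. \<forall>h \<in> lp_space (conj_exp p).
       (\<forall>g\<in>carrier G. dual_rep G \<pi> g h = h) \<longrightarrow> lp_pairing f h = 0}"

definition property_T_lp :: "('g, 'b) monoid_scheme \<Rightarrow> real \<Rightarrow> bool" where
  "property_T_lp G p \<longleftrightarrow>
     (\<forall>\<pi>. orth_rep G p \<pi> \<longrightarrow>
        \<not> (\<exists>f :: nat \<Rightarrow> nat \<Rightarrow> complex.
              (\<forall>k. f k \<in> lp_prime G p \<pi> \<and> lp_norm p (f k) = 1) \<and>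
              (\<forall>g\<in>carrier G. (\<lambda>k. lp_norm p (\<lambda>n. \<pi> g (f k) n - f k n)) \<longlonglongrightarrow> 0)))"

definition lcosets :: "('g, 'b) monoid_scheme \<Rightarrow> 'g set \<Rightarrow> 'g set set" where
  "lcosets G H = (\<lambda>x. x <#\<^bsub>G\<^esub> H) ` carrier G"

definition finite_index_subgroups :: "('g, 'b) monoid_scheme \<Rightarrow> 'g set set" where
  "finite_index_subgroups G = {H. subgroup H G \<and> finite (lcosets G H)}"

definition quasi_reg :: "('g, 'b) monoid_scheme \<Rightarrow> 'g \<Rightarrow> ('g set \<Rightarrow> complex) \<Rightarrow> ('g set \<Rightarrow> complex)" where
  "quasi_reg G g \<xi> = (\<lambda>c. \<xi> (inv\<^bsub>G\<^esub> g <#\<^bsub>G\<^esub> c))"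

definition quasi_reg_invariant :: "('g, 'b) monoid_scheme \<Rightarrow> 'g set \<Rightarrow> ('g set \<Rightarrow> complex) \<Rightarrow> bool" where
  "quasi_reg_invariant G H \<eta> \<longleftrightarrow>
     (\<forall>g\<in>carrier G. \<forall>c\<in>lcosets G H. quasi_reg G g \<eta> c = \<eta> c)"

definition l2_inner :: "('g, 'b) monoid_scheme \<Rightarrow> 'g set \<Rightarrow> ('g set \<Rightarrow> complex) \<Rightarrow> ('g set \<Rightarrow> complex) \<Rightarrow> complex" where
  "l2_inner G H \<xi> \<eta> = (\<Sum>c\<in>lcosets G H. \<xi> c * cnj (\<eta> c))"

definition l2_normsq :: "('g, 'b) monoid_scheme \<Rightarrow> 'g set \<Rightarrow> ('g set \<Rightarrow> complex) \<Rightarrow> real" where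
  "l2_normsq G H \<xi> = (\<Sum>c\<in>lcosets G H. (cmod (\<xi> c))\<^sup>2)"

text \<open>Vectors of the Hilbert direct sum over finite index subgroups H of the orthogonal
  complements of the invariant vectors in l_2(Gamma/H): families xi H, each component
  orthogonal to the invariant vectors, with square-summable norms.\<close>
definition tau_sum_space :: "('g, 'b) monoid_scheme \<Rightarrow> ('g set \<Rightarrow> 'g set \<Rightarrow> complex) set" where
  "tau_sum_space G = {\<xi>.
     (\<forall>H\<in>finite_index_subgroups G. \<forall>\<eta>. quasi_reg_invariant G H \<eta> \<longrightarrow> l2_inner G H (\<xi> H) \<eta> = 0) \<and>
     (\<lambda>H. l2_normsq G H (\<xi> H)) summable_on finite_index_subgroups G}"

definition tau_normsq :: "('g, 'b) monoid_scheme \<Rightarrow> ('g set \<Rightarrow> 'g set \<Rightarrow> complex) \<Rightarrow> real" where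
  "tau_normsq G \<xi> = (\<Sum>\<^sub>\<infinity>H\<in>finite_index_subgroups G. l2_normsq G H (\<xi> H))"

definition property_tau :: "('g, 'b) monoid_scheme \<Rightarrow> bool" where
  "property_tau G \<longleftrightarrow>
     \<not> (\<exists>\<xi> :: nat \<Rightarrow> 'g set \<Rightarrow> 'g set \<Rightarrow> complex.
          (\<forall>k. \<xi> k \<in> tau_sum_space G \<and> tau_normsq G (\<xi> k) = 1) \<and>
          (\<forall>g\<in>carrier G. (\<lambda>k. tau_normsq G (\<lambda>H. (\<lambda>c. quasi_reg G g (\<xi> k H) c - \<xi> k H c))) \<longlonglongrightarrow> 0))"

end

theory Submission
  imports Defs
begin

text \<open>If \<Gamma> fails (\<tau>), then for every finite S \<subseteq> \<Gamma> and \<delta> > 0 an almost invariant unit vector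
  of the direct sum puts, on some finite quotient \<Gamma>/H, a zero-mean component whose Dirichlet energy
  is small relative to its mass. A discrete Cheeger argument (splitting at a median, then the
  co-area formula for the squares) turns it into a set A \<subseteq> \<Gamma>/H with 2|A| \<le> |\<Gamma>/H| whose
  S-boundary is smaller than \<delta>|A|. Now let \<Gamma> permute the disjoint union of such quotients \<Gamma>/H_k,
  enumerated by \<nat>: the normalized centered indicators of the sets A_k are unit vectors of l'_p,
  and the p-th power of their displacement under g is at most 2^p times the relative size of the
  g-boundary of A_k, which tends to 0. So \<Gamma> fails (T_lp).\<close>

section \<open>Cheeger inequality for finite permutation actions\<close>

definition edge_boundary :: "('s \<Rightarrow> 'x \<Rightarrow> 'x) \<Rightarrow> 'x set \<Rightarrow> 'x set \<Rightarrow> 's \<Rightarrow> 'x set" where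
  "edge_boundary \<sigma> X A g = {c\<in>X. (\<sigma> g c \<in> A) \<noteq> (c \<in> A)}"

definition small_boundary_set ::
  "('s \<Rightarrow> 'x \<Rightarrow> 'x) \<Rightarrow> 's set \<Rightarrow> 'x set \<Rightarrow> real \<Rightarrow> 'x set \<Rightarrow> bool" where
  "small_boundary_set \<sigma> S X \<delta> A \<longleftrightarrow> A \<subseteq> X \<and> A \<noteq> {} \<and> 2 * card A \<le> card X \<and>
     (\<Sum>g\<in>S. real (card (edge_boundary \<sigma> X A g))) < \<delta> * card A"

definition dirichlet_energy ::
  "('s \<Rightarrow> 'x \<Rightarrow> 'x) \<Rightarrow> 's set \<Rightarrow> 'x set \<Rightarrow> ('x \<Rightarrow> 'a::real_normed_vector) \<Rightarrow> real" where
  "dirichlet_energy \<sigma> S X u = (\<Sum>g\<in>S. \<Sum>c\<in>X. (norm (u (\<sigma> g c) - u c))\<^sup>2)"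

definition sq_norm_sum :: "'x set \<Rightarrow> ('x \<Rightarrow> 'a::real_normed_vector) \<Rightarrow> real" where
  "sq_norm_sum X u = (\<Sum>c\<in>X. (norm (u c))\<^sup>2)"

lemma dirichlet_energy_nonneg: "dirichlet_energy \<sigma> S X u \<ge> 0"
  unfolding dirichlet_energy_def by (intro sum_nonneg) simp

lemma sq_norm_sum_nonneg: "sq_norm_sum X u \<ge> 0"
  unfolding sq_norm_sum_def by (intro sum_nonneg) simp

lemma sq_norm_sum_reindex:
  assumes "bij_betw f X X"
  shows "sq_norm_sum X (\<lambda>c. u (f c)) = sq_norm_sum X u"
  using sum.reindex_bij_betw[OF assms, of "\<lambda>c. (norm (u c))\<^sup>2"] by (simp add: sq_norm_sum_def)

lemma abs_diff_squares_le:
  fixes a b \<eta> :: real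
  assumes "\<eta> > 0"
  shows "\<bar>a\<^sup>2 - b\<^sup>2\<bar> \<le> (a - b)\<^sup>2 / (2 * \<eta>) + \<eta> * (a\<^sup>2 + b\<^sup>2)"
proof -
  have "0 \<le> (\<bar>a - b\<bar> - \<eta> * \<bar>a + b\<bar>)\<^sup>2" by simp
  then have "2 * \<eta> * (\<bar>a - b\<bar> * \<bar>a + b\<bar>) \<le> (a - b)\<^sup>2 + \<eta>\<^sup>2 * (a + b)\<^sup>2"
    by (simp add: power2_eq_square algebra_simps)
  moreover have "\<eta>\<^sup>2 * (a + b)\<^sup>2 \<le> \<eta>\<^sup>2 * (2 * (a\<^sup>2 + b\<^sup>2))"
    using zero_le_power2[of "a - b"] by (intro mult_left_mono) (simp_all add: power2_eq_square algebra_simps)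
  moreover have "\<eta>\<^sup>2 * (2 * (a\<^sup>2 + b\<^sup>2)) = 2 * \<eta>\<^sup>2 * (a\<^sup>2 + b\<^sup>2)"
    by simp
  ultimately have "2 * \<eta> * (\<bar>a - b\<bar> * \<bar>a + b\<bar>) \<le> (a - b)\<^sup>2 + 2 * \<eta>\<^sup>2 * (a\<^sup>2 + b\<^sup>2)"
    by linarith
  moreover have "\<bar>a - b\<bar> * \<bar>a + b\<bar> = \<bar>a\<^sup>2 - b\<^sup>2\<bar>"
    by (simp add: power2_eq_square abs_mult[symmetric] algebra_simps)
  ultimately have "2 * \<eta> * \<bar>a\<^sup>2 - b\<^sup>2\<bar> \<le> (a - b)\<^sup>2 + 2 * \<eta>\<^sup>2 * (a\<^sup>2 + b\<^sup>2)"
    by simp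
  then show ?thesis
    using assms by (simp add: field_simps power2_eq_square)
qed

lemma sum_abs_diff_squares_le:
  fixes u :: "'x \<Rightarrow> real"
  assumes bij: "\<And>g. g \<in> S \<Longrightarrow> bij_betw (\<sigma> g) X X" and "\<eta> > 0"
  shows "(\<Sum>g\<in>S. \<Sum>c\<in>X. \<bar>(u (\<sigma> g c))\<^sup>2 - (u c)\<^sup>2\<bar>)
    \<le> dirichlet_energy \<sigma> S X u / (2 * \<eta>) + 2 * \<eta> * card S * sq_norm_sum X u"
proof -
  have shift: "(\<Sum>c\<in>X. (u (\<sigma> g c))\<^sup>2) = sq_norm_sum X u" if "g \<in> S" for g
    using sq_norm_sum_reindex[OF bij[OF that], of u] by (simp add: sq_norm_sum_def)
  have "(\<Sum>g\<in>S. \<Sum>c\<in>X. \<bar>(u (\<sigma> g c))\<^sup>2 - (u c)\<^sup>2\<bar>)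
      \<le> (\<Sum>g\<in>S. \<Sum>c\<in>X. (u (\<sigma> g c) - u c)\<^sup>2 / (2 * \<eta>) + \<eta> * ((u (\<sigma> g c))\<^sup>2 + (u c)\<^sup>2))"
    by (intro sum_mono abs_diff_squares_le assms)
  also have "\<dots> = (\<Sum>g\<in>S. (\<Sum>c\<in>X. (u (\<sigma> g c) - u c)\<^sup>2) / (2 * \<eta>)
                      + \<eta> * ((\<Sum>c\<in>X. (u (\<sigma> g c))\<^sup>2) + (\<Sum>c\<in>X. (u c)\<^sup>2)))"
    by (simp add: sum.distrib flip: sum_divide_distrib sum_distrib_left)
  also have "\<dots> = (\<Sum>g\<in>S. (\<Sum>c\<in>X. (u (\<sigma> g c) - u c)\<^sup>2) / (2 * \<eta>) + 2 * \<eta> * sq_norm_sum X u)"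
    by (intro sum.cong refl) (simp add: shift sq_norm_sum_def)
  also have "\<dots> = dirichlet_energy \<sigma> S X u / (2 * \<eta>) + 2 * \<eta> * card S * sq_norm_sum X u"
    by (simp add: dirichlet_energy_def sum.distrib sum_divide_distrib)
  finally show ?thesis .
qed

lemma sum_indicator_eq_card_level:
  assumes "finite X"
  shows "(\<Sum>c\<in>X. indicator (B c) t :: 'a::semiring_1) = of_nat (card {c\<in>X. t \<in> B c})"
  using assms by (simp add: indicator_def sum.If_cases Int_def)

lemma nn_integral_less_imp_less:
  assumes "g \<in> borel_measurable M" "(\<integral>\<^sup>+x. f x \<partial>M) < c * (\<integral>\<^sup>+x. g x \<partial>M)"
  shows "\<exists>x. f x < c * g x"
proof (rule ccontr)
  assume "\<nexists>x. f x < c * g x"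
  then have "(\<integral>\<^sup>+x. c * g x \<partial>M) \<le> (\<integral>\<^sup>+x. f x \<partial>M)" by (intro nn_integral_mono) (simp add: not_less)
  with assms show False by (simp add: nn_integral_cmult)
qed

lemma max_minus_min: "max x y - min x y = \<bar>x - y :: real\<bar>"
  by auto

text \<open>The discrete co-area formula: integrating over the threshold t, the level sets
  {v > t} have total size \<Sum>v and total boundary \<Sum>|v(\<sigma> g c) - v c|.\<close>

lemma coarea_level_set:
  fixes v :: "'x \<Rightarrow> real"
  assumes X: "finite X" and S: "finite S"
    and maps: "\<And>g c. g \<in> S \<Longrightarrow> c \<in> X \<Longrightarrow> \<sigma> g c \<in> X"
    and v_nonneg: "\<And>c. c \<in> X \<Longrightarrow> v c \<ge> 0"
    and small: "(\<Sum>g\<in>S. \<Sum>c\<in>X. \<bar>v (\<sigma> g c) - v c\<bar>) < \<delta> * (\<Sum>c\<in>X. v c)"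
  shows "\<exists>t\<ge>0. {c\<in>X. t < v c} \<noteq> {} \<and>
    (\<Sum>g\<in>S. real (card (edge_boundary \<sigma> X {c\<in>X. t < v c} g))) < \<delta> * card {c\<in>X. t < v c}"
proof -
  define T where "T = (\<Sum>g\<in>S. \<Sum>c\<in>X. \<bar>v (\<sigma> g c) - v c\<bar>)"
  define N where "N = (\<Sum>c\<in>X. v c)"
  define jump where "jump g c = {min (v (\<sigma> g c)) (v c)..<max (v (\<sigma> g c)) (v c)}" for g c
  define F where "F t = (\<Sum>g\<in>S. \<Sum>c\<in>X. indicator (jump g c) t :: ennreal)" for t
  define G where "G t = (\<Sum>c\<in>X. indicator {0..<v c} t :: ennreal)" for t
  have "T \<ge> 0" "N \<ge> 0" unfolding T_def N_def using v_nonneg by (auto intro!: sum_nonneg)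
  with small have \<delta>: "\<delta> > 0" unfolding T_def[symmetric] N_def[symmetric]
    by (smt (verit) mult_nonpos_nonneg)
  have "(\<integral>\<^sup>+t. F t \<partial>lborel) = (\<Sum>g\<in>S. \<Sum>c\<in>X. ennreal \<bar>v (\<sigma> g c) - v c\<bar>)"
    unfolding F_def jump_def by (simp add: nn_integral_sum max_minus_min)
  also have "\<dots> = ennreal T" unfolding T_def by (simp add: sum_nonneg)
  finally have int_F: "(\<integral>\<^sup>+t. F t \<partial>lborel) = ennreal T" .
  have int_G: "(\<integral>\<^sup>+t. G t \<partial>lborel) = ennreal N"
    unfolding G_def N_def using v_nonneg by (simp add: nn_integral_sum sum_nonneg)
  have "G \<in> borel_measurable lborel" unfolding G_def by measurable
  moreover have "(\<integral>\<^sup>+t. F t \<partial>lborel) < ennreal \<delta> * (\<integral>\<^sup>+t. G t \<partial>lborel)"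
    using small \<open>T \<ge> 0\<close> \<open>N \<ge> 0\<close> \<delta> unfolding int_F int_G T_def[symmetric] N_def[symmetric]
    by (simp add: ennreal_mult[symmetric] ennreal_less_iff)
  ultimately obtain t where t: "F t < ennreal \<delta> * G t" by (blast dest: nn_integral_less_imp_less)
  define A where "A = {c\<in>X. t < v c}"
  have "G t = of_nat (card {c\<in>X. 0 \<le> t \<and> t < v c})"
    unfolding G_def by (simp add: sum_indicator_eq_card_level[OF X])
  moreover have "G t \<noteq> 0" using t by auto
  ultimately have "t \<ge> 0" by (metis (mono_tags, lifting) card.empty empty_Collect_eq of_nat_0)
  then have G_t: "G t = of_nat (card A)"
    unfolding G_def A_def by (simp add: sum_indicator_eq_card_level[OF X])
  have "{c\<in>X. t \<in> jump g c} = edge_boundary \<sigma> X A g" if "g \<in> S" for g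
    using \<open>t \<ge> 0\<close> maps[OF that] unfolding jump_def edge_boundary_def A_def
    by (auto simp: min_def max_def)
  then have F_t: "F t = of_nat (\<Sum>g\<in>S. card (edge_boundary \<sigma> X A g))"
    unfolding F_def by (simp add: sum_indicator_eq_card_level[OF X])
  have "ennreal (\<Sum>g\<in>S. real (card (edge_boundary \<sigma> X A g))) < ennreal (\<delta> * card A)"
    using t \<delta> unfolding F_t G_t by (simp add: ennreal_of_nat_eq_real_of_nat ennreal_mult)
  then have "(\<Sum>g\<in>S. real (card (edge_boundary \<sigma> X A g))) < \<delta> * card A"
    by (subst (asm) ennreal_less_iff) (auto intro: sum_nonneg)
  moreover from this have "A \<noteq> {}"
    using sum_nonneg[of S "\<lambda>g. real (card (edge_boundary \<sigma> X A g))"] by auto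
  ultimately show ?thesis using \<open>t \<ge> 0\<close> unfolding A_def by blast
qed


lemma small_boundary_set_of_nonneg:
  fixes u :: "'x \<Rightarrow> real"
  assumes X: "finite X" and S: "finite S"
    and bij: "\<And>g. g \<in> S \<Longrightarrow> bij_betw (\<sigma> g) X X"
    and u_nonneg: "\<And>c. c \<in> X \<Longrightarrow> u c \<ge> 0"
    and half: "2 * card {c\<in>X. u c \<noteq> 0} \<le> card X"
    and "\<delta> > 0"
    and small: "dirichlet_energy \<sigma> S X u < \<delta>\<^sup>2 / (4 * (card S + 1)) * sq_norm_sum X u"
  shows "\<exists>A. small_boundary_set \<sigma> S X \<delta> A"
proof -
  define s where "s = real (card S)"
  define N where "N = sq_norm_sum X u"
  define a where "a = 4 * (s + 1)"
  define \<eta> where "\<eta> = \<delta> / a"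
  have "s \<ge> 0" "a > 0" "\<eta> > 0" unfolding s_def a_def \<eta>_def using \<open>\<delta> > 0\<close> by auto
  have "N > 0"
    using small dirichlet_energy_nonneg[of \<sigma> S X u] unfolding N_def
    by (smt (verit) divide_nonneg_nonneg mult_nonneg_nonpos zero_le_power2 of_nat_0_le_iff)
  have "dirichlet_energy \<sigma> S X u / (2 * \<eta>) < \<delta>\<^sup>2 / a * N / (2 * \<eta>)"
    using small \<open>\<eta> > 0\<close> unfolding s_def N_def a_def
    by (intro divide_strict_right_mono) (auto simp: add.commute)
  also have "\<dots> = \<delta> * N / 2"
    unfolding \<eta>_def using \<open>\<delta> > 0\<close> \<open>a > 0\<close> by (simp add: field_simps power2_eq_square)
  finally have energy_term: "dirichlet_energy \<sigma> S X u / (2 * \<eta>) < \<delta> * N / 2" .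
  have "2 * \<eta> * s * N = \<delta> * N / 2 * (4 * s / a)"
    unfolding \<eta>_def using \<open>a > 0\<close> by (simp add: field_simps)
  also have "\<dots> \<le> \<delta> * N / 2"
    using \<open>\<delta> > 0\<close> \<open>N > 0\<close> \<open>a > 0\<close> unfolding a_def by (intro mult_left_le) auto
  finally have mass_term: "2 * \<eta> * s * N \<le> \<delta> * N / 2" .
  have maps: "\<sigma> g c \<in> X" if "g \<in> S" "c \<in> X" for g c
    using bij_betw_apply[OF bij] that .
  have "(\<Sum>g\<in>S. \<Sum>c\<in>X. \<bar>(u (\<sigma> g c))\<^sup>2 - (u c)\<^sup>2\<bar>) < \<delta> * (\<Sum>c\<in>X. (u c)\<^sup>2)"
    using sum_abs_diff_squares_le[where S = S and \<sigma> = \<sigma> and X = X and u = u, OF bij \<open>\<eta> > 0\<close>]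
      energy_term mass_term
    unfolding s_def N_def sq_norm_sum_def by simp
  from coarea_level_set[OF X S maps zero_le_power2 this]
  obtain t where "t \<ge> 0" and A: "{c\<in>X. t < (u c)\<^sup>2} \<noteq> {}"
    "(\<Sum>g\<in>S. real (card (edge_boundary \<sigma> X {c\<in>X. t < (u c)\<^sup>2} g))) < \<delta> * card {c\<in>X. t < (u c)\<^sup>2}"
    by blast
  have "{c\<in>X. t < (u c)\<^sup>2} \<subseteq> {c\<in>X. u c \<noteq> 0}" using \<open>t \<ge> 0\<close> by auto
  then have "card {c\<in>X. t < (u c)\<^sup>2} \<le> card {c\<in>X. u c \<noteq> 0}" using X by (intro card_mono) auto
  then show ?thesis
    using A half unfolding small_boundary_set_def by (intro exI[of _ "{c\<in>X. t < (u c)\<^sup>2}"]) auto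
qed

lemma sq_diff_pos_part_plus_sq_diff_neg_part_le:
  fixes x y :: real
  shows "(max x 0 - max y 0)\<^sup>2 + (max (- x) 0 - max (- y) 0)\<^sup>2 \<le> (x - y)\<^sup>2"
proof (cases "x \<ge> 0"; cases "y \<ge> 0")
  assume "x \<ge> 0" "\<not> y \<ge> 0"
  then have "0 \<le> - (x * y)" by (simp add: mult_nonneg_nonpos)
  then show ?thesis using \<open>x \<ge> 0\<close> \<open>\<not> y \<ge> 0\<close> by (simp add: max_def power2_eq_square algebra_simps)
next
  assume "\<not> x \<ge> 0" "y \<ge> 0"
  then have "0 \<le> - (x * y)" by (simp add: mult_nonpos_nonneg)
  then show ?thesis using \<open>\<not> x \<ge> 0\<close> \<open>y \<ge> 0\<close> by (simp add: max_def power2_eq_square algebra_simps)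
qed (auto simp: max_def power2_eq_square algebra_simps)

lemma exists_median:
  fixes f :: "'x \<Rightarrow> real"
  assumes "finite X" "X \<noteq> {}"
  shows "\<exists>m. 2 * card {c\<in>X. m < f c} \<le> card X \<and> 2 * card {c\<in>X. f c < m} \<le> card X"
proof -
  define P where "P m \<longleftrightarrow> 2 * card {c\<in>X. m < f c} \<le> card X" for m
  have image_f: "finite (f ` X)" "f ` X \<noteq> {}" using assms by auto
  have none_above: "{c\<in>X. Max (f ` X) < f c} = {}" using image_f(1) by (auto simp: not_less)
  have "P (Max (f ` X))" unfolding P_def none_above by simp
  with Max_in[OF image_f] have candidates: "finite {v\<in>f ` X. P v}" "{v\<in>f ` X. P v} \<noteq> {}"
    using image_f(1) by auto
  define m where "m = Min {v\<in>f ` X. P v}"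
  have "P m" using Min_in[OF candidates] unfolding m_def by auto
  have least: "m \<le> v" if "v \<in> f ` X" "P v" for v
    unfolding m_def using candidates that by auto
  have "2 * card {c\<in>X. f c < m} \<le> card X"
  proof (cases "{c\<in>X. f c < m} = {}")
    case True
    show ?thesis unfolding True by simp
  next
    case False
    then have below: "finite {v\<in>f ` X. v < m}" "{v\<in>f ` X. v < m} \<noteq> {}" using image_f by auto
    define m' where "m' = Max {v\<in>f ` X. v < m}"
    have "m' \<in> f ` X" "m' < m" using Max_in[OF below] unfolding m'_def by auto
    then have "\<not> P m'" using least by force
    have "m \<le> f c" if "c \<in> X" "m' < f c" for c
    proof (rule ccontr)
      assume "\<not> m \<le> f c"
      then have "f c \<le> m'" unfolding m'_def using that(1) below(1) by (intro Max_ge) auto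
      with that(2) show False by simp
    qed
    then have "{c\<in>X. m' < f c} = {c\<in>X. m \<le> f c}" using \<open>m' < m\<close> by force
    with \<open>\<not> P m'\<close> have "card X < 2 * card {c\<in>X. m \<le> f c}" unfolding P_def by simp
    moreover have "card {c\<in>X. f c < m} + card {c\<in>X. m \<le> f c} = card X"
      using assms(1) by (subst card_Un_disjoint[symmetric]) (auto intro: arg_cong[of _ _ card])
    ultimately show ?thesis by linarith
  qed
  with \<open>P m\<close> show ?thesis unfolding P_def by blast
qed

lemma small_boundary_set_of_mean_zero:
  fixes f :: "'x \<Rightarrow> real"
  assumes X: "finite X" and S: "finite S"
    and bij: "\<And>g. g \<in> S \<Longrightarrow> bij_betw (\<sigma> g) X X"
    and mean: "(\<Sum>c\<in>X. f c) = 0" and "\<delta> > 0"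
    and small: "dirichlet_energy \<sigma> S X f < \<delta>\<^sup>2 / (4 * (card S + 1)) * sq_norm_sum X f"
  shows "\<exists>A. small_boundary_set \<sigma> S X \<delta> A"
proof -
  define \<kappa> where "\<kappa> = \<delta>\<^sup>2 / (4 * (card S + 1))"
  have "\<kappa> \<ge> 0" unfolding \<kappa>_def by simp
  have "X \<noteq> {}" using small dirichlet_energy_nonneg[of \<sigma> S X f] by (auto simp: sq_norm_sum_def)
  then obtain m where m: "2 * card {c\<in>X. m < f c} \<le> card X" "2 * card {c\<in>X. f c < m} \<le> card X"
    using exists_median[OF X] by blast
  define u\<^sub>1 where "u\<^sub>1 c = max (f c - m) 0" for c
  define u\<^sub>2 where "u\<^sub>2 c = max (- (f c - m)) 0" for c
  have "dirichlet_energy \<sigma> S X u\<^sub>1 + dirichlet_energy \<sigma> S X u\<^sub>2 \<le> dirichlet_energy \<sigma> S X f"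
    unfolding dirichlet_energy_def u\<^sub>1_def u\<^sub>2_def sum.distrib[symmetric]
    using sq_diff_pos_part_plus_sq_diff_neg_part_le[of "f (\<sigma> _ _) - m" "f _ - m"]
    by (intro sum_mono) simp
  moreover have "sq_norm_sum X f \<le> sq_norm_sum X u\<^sub>1 + sq_norm_sum X u\<^sub>2"
  proof -
    have "sq_norm_sum X u\<^sub>1 + sq_norm_sum X u\<^sub>2 = (\<Sum>c\<in>X. (f c - m)\<^sup>2)"
      unfolding sq_norm_sum_def u\<^sub>1_def u\<^sub>2_def sum.distrib[symmetric]
      by (intro sum.cong) (auto simp: max_def power2_commute)
    also have "\<dots> = (\<Sum>c\<in>X. (f c)\<^sup>2 - (2 * m) * f c + m\<^sup>2)"
      by (intro sum.cong) (simp_all add: power2_diff algebra_simps)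
    also have "\<dots> = sq_norm_sum X f - 2 * m * (\<Sum>c\<in>X. f c) + card X * m\<^sup>2"
      by (simp add: sq_norm_sum_def sum.distrib sum_subtractf sum_distrib_left)
    finally show ?thesis using mean by simp
  qed
  ultimately consider "dirichlet_energy \<sigma> S X u\<^sub>1 < \<kappa> * sq_norm_sum X u\<^sub>1"
    | "dirichlet_energy \<sigma> S X u\<^sub>2 < \<kappa> * sq_norm_sum X u\<^sub>2"
    using small \<open>\<kappa> \<ge> 0\<close> unfolding \<kappa>_def[symmetric]
    by (smt (verit, best) distrib_left mult_left_mono)
  then show ?thesis
  proof cases
    case 1
    moreover have "{c\<in>X. u\<^sub>1 c \<noteq> 0} = {c\<in>X. m < f c}" unfolding u\<^sub>1_def by (auto simp: max_def)
    ultimately show ?thesis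
      using small_boundary_set_of_nonneg[where S = S and \<sigma> = \<sigma> and X = X and u = u\<^sub>1, OF X S bij] m \<open>\<delta> > 0\<close>
      unfolding \<kappa>_def by (simp add: u\<^sub>1_def)
  next
    case 2
    moreover have "{c\<in>X. u\<^sub>2 c \<noteq> 0} = {c\<in>X. f c < m}" unfolding u\<^sub>2_def by (auto simp: max_def)
    ultimately show ?thesis
      using small_boundary_set_of_nonneg[where S = S and \<sigma> = \<sigma> and X = X and u = u\<^sub>2, OF X S bij] m \<open>\<delta> > 0\<close>
      unfolding \<kappa>_def by (simp add: u\<^sub>2_def)
  qed
qed

lemma small_boundary_set_of_complex_mean_zero:
  fixes \<xi> :: "'x \<Rightarrow> complex"
  assumes X: "finite X" and S: "finite S"
    and bij: "\<And>g. g \<in> S \<Longrightarrow> bij_betw (\<sigma> g) X X"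
    and mean: "(\<Sum>c\<in>X. \<xi> c) = 0" and "\<delta> > 0"
    and small: "dirichlet_energy \<sigma> S X \<xi> < \<delta>\<^sup>2 / (8 * (card S + 1)) * sq_norm_sum X \<xi>"
  shows "\<exists>A. small_boundary_set \<sigma> S X \<delta> A"
proof -
  have real_part: "\<exists>A. small_boundary_set \<sigma> S X \<delta> A"
    if R: "R = Re \<or> R = Im" and big: "sq_norm_sum X \<xi> \<le> 2 * sq_norm_sum X (\<lambda>c. R (\<xi> c))" for R
  proof (rule small_boundary_set_of_mean_zero[OF X S bij _ \<open>\<delta> > 0\<close>])
    show "(\<Sum>c\<in>X. R (\<xi> c)) = 0" using mean R by (auto simp flip: Re_sum Im_sum)
    have "(norm (R a - R b))\<^sup>2 \<le> (norm (a - b))\<^sup>2" for a b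
      by (rule power_mono) (use R abs_Re_le_cmod[of "a - b"] abs_Im_le_cmod[of "a - b"] in auto)
    then have "dirichlet_energy \<sigma> S X (\<lambda>c. R (\<xi> c)) \<le> dirichlet_energy \<sigma> S X \<xi>"
      unfolding dirichlet_energy_def by (intro sum_mono)
    also have "\<dots> < \<delta>\<^sup>2 / (8 * (card S + 1)) * sq_norm_sum X \<xi>" by (fact small)
    also have "\<dots> \<le> \<delta>\<^sup>2 / (8 * (card S + 1)) * (2 * sq_norm_sum X (\<lambda>c. R (\<xi> c)))"
      using big by (intro mult_left_mono) auto
    also have "\<dots> = \<delta>\<^sup>2 / (4 * (card S + 1)) * sq_norm_sum X (\<lambda>c. R (\<xi> c))"
      by (simp add: field_simps)
    finally show "dirichlet_energy \<sigma> S X (\<lambda>c. R (\<xi> c))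
      < \<delta>\<^sup>2 / (4 * (card S + 1)) * sq_norm_sum X (\<lambda>c. R (\<xi> c))" .
  qed
  have "sq_norm_sum X \<xi> = sq_norm_sum X (\<lambda>c. Re (\<xi> c)) + sq_norm_sum X (\<lambda>c. Im (\<xi> c))"
    by (simp add: sq_norm_sum_def cmod_power2 sum.distrib)
  then have "sq_norm_sum X \<xi> \<le> 2 * sq_norm_sum X (\<lambda>c. Re (\<xi> c))
      \<or> sq_norm_sum X \<xi> \<le> 2 * sq_norm_sum X (\<lambda>c. Im (\<xi> c))"
    by linarith
  then show ?thesis using real_part[of Re] real_part[of Im] by auto
qed


section \<open>Failure of property (\<tau>)\<close>

lemma (in group) lcosets_subset_carrier:
  assumes "subgroup H G" "c \<in> lcosets G H"
  shows "c \<subseteq> carrier G"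
  using assms l_coset_subset_G[OF subgroup.subset] unfolding lcosets_def by blast

lemma (in group) lcosets_translate_closed:
  assumes "subgroup H G" "g \<in> carrier G" "c \<in> lcosets G H"
  shows "g <# c \<in> lcosets G H"
proof -
  obtain x where "x \<in> carrier G" "c = x <# H" using assms(3) unfolding lcosets_def by blast
  then have "g <# c = (g \<otimes> x) <# H" using assms by (simp add: lcos_m_assoc subgroup.subset)
  then show ?thesis using \<open>x \<in> carrier G\<close> assms(2) unfolding lcosets_def by auto
qed

lemma (in group) lcosets_translate_mult:
  assumes "subgroup H G" "g \<in> carrier G" "h \<in> carrier G" "c \<in> lcosets G H"
  shows "g <# (h <# c) = (g \<otimes> h) <# c"
  using assms lcosets_subset_carrier by (simp add: lcos_m_assoc)

lemma (in group) lcosets_translate_one: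
  assumes "subgroup H G" "c \<in> lcosets G H"
  shows "\<one> <# c = c"
  using assms lcosets_subset_carrier by (simp add: lcos_mult_one)

lemma (in group) lcosets_translate_transitive:
  assumes "subgroup H G" "c \<in> lcosets G H" "c' \<in> lcosets G H"
  shows "\<exists>g\<in>carrier G. g <# c = c'"
proof -
  obtain x y where xy: "x \<in> carrier G" "c = x <# H" "y \<in> carrier G" "c' = y <# H"
    using assms(2,3) unfolding lcosets_def by blast
  then have "(y \<otimes> inv x) <# c = (y \<otimes> inv x \<otimes> x) <# H"
    using assms(1) by (simp add: lcos_m_assoc subgroup.subset)
  also have "y \<otimes> inv x \<otimes> x = y" using xy by (simp add: m_assoc)
  finally show ?thesis using xy by blast
qed

lemma (in group) bij_betw_lcosets_translate:
  assumes "subgroup H G" "g \<in> carrier G"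
  shows "bij_betw (\<lambda>c. g <# c) (lcosets G H) (lcosets G H)"
proof (rule bij_betw_byWitness[where f' = "\<lambda>c. inv g <# c"])
  show "\<forall>c\<in>lcosets G H. inv g <# (g <# c) = c" "\<forall>c\<in>lcosets G H. g <# (inv g <# c) = c"
    using assms by (simp_all add: lcosets_translate_mult lcosets_translate_one)
  show "(\<lambda>c. g <# c) ` lcosets G H \<subseteq> lcosets G H" "(\<lambda>c. inv g <# c) ` lcosets G H \<subseteq> lcosets G H"
    using assms by (auto intro: lcosets_translate_closed)
qed

lemma (in group) sq_norm_sum_quasi_reg:
  assumes "subgroup H G" "g \<in> carrier G"
  shows "sq_norm_sum (lcosets G H) (quasi_reg G g \<xi>) = sq_norm_sum (lcosets G H) \<xi>"
  unfolding quasi_reg_def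
  by (rule sq_norm_sum_reindex) (use assms bij_betw_lcosets_translate in simp)

lemma power2_norm_diff_le: "(norm (a - b))\<^sup>2 \<le> 2 * (norm a)\<^sup>2 + 2 * (norm b)\<^sup>2"
proof -
  have "(norm (a - b))\<^sup>2 \<le> (norm a + norm b)\<^sup>2"
    by (intro power_mono norm_triangle_ineq4) simp
  also have "\<dots> \<le> 2 * (norm a)\<^sup>2 + 2 * (norm b)\<^sup>2"
    using zero_le_power2[of "norm a - norm b"] by (simp add: power2_eq_square algebra_simps)
  finally show ?thesis .
qed

lemma (in group) sq_norm_sum_quasi_reg_diff_le:
  assumes "subgroup H G" "g \<in> carrier G"
  shows "sq_norm_sum (lcosets G H) (\<lambda>c. quasi_reg G g \<xi> c - \<xi> c) \<le> 4 * sq_norm_sum (lcosets G H) \<xi>"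
proof -
  have "sq_norm_sum (lcosets G H) (\<lambda>c. quasi_reg G g \<xi> c - \<xi> c)
      \<le> 2 * sq_norm_sum (lcosets G H) (quasi_reg G g \<xi>) + 2 * sq_norm_sum (lcosets G H) \<xi>"
    unfolding sq_norm_sum_def sum_distrib_left sum.distrib[symmetric]
    by (intro sum_mono power2_norm_diff_le)
  then show ?thesis using sq_norm_sum_quasi_reg[OF assms] by simp
qed

lemma has_sum_finite_sum:
  fixes f :: "'s \<Rightarrow> 'a \<Rightarrow> 'b::topological_comm_monoid_add"
  assumes "finite S" "\<And>g. g \<in> S \<Longrightarrow> (f g has_sum s g) A"
  shows "((\<lambda>x. \<Sum>g\<in>S. f g x) has_sum (\<Sum>g\<in>S. s g)) A"
  using assms
proof (induction S rule: finite_induct)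
  case (insert a S)
  have "(f a has_sum s a) A" "((\<lambda>x. \<Sum>g\<in>S. f g x) has_sum (\<Sum>g\<in>S. s g)) A"
    using insert by simp_all
  then show ?case using insert.hyps by (simp add: has_sum_add)
qed simp

lemma has_sum_exists_small_ratio:
  fixes n d :: "'a \<Rightarrow> real"
  assumes "(n has_sum N) A" "(d has_sum D) A" "D < \<epsilon> * N"
  shows "\<exists>a\<in>A. d a < \<epsilon> * n a"
proof (rule ccontr)
  assume "\<not> ?thesis"
  then have "\<epsilon> * n a \<le> d a" if "a \<in> A" for a using that by (simp add: not_less)
  then have "\<epsilon> * N \<le> D" by (rule has_sum_mono[OF has_sum_cmult_right[OF assms(1)] assms(2)])
  with assms(3) show False by simp
qed

lemma (in group) has_sum_quasi_reg_defect:
  assumes "\<xi> \<in> tau_sum_space G" "finite S" "S \<subseteq> carrier G"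
  shows "((\<lambda>H. \<Sum>g\<in>S. sq_norm_sum (lcosets G H) (\<lambda>c. quasi_reg G g (\<xi> H) c - \<xi> H c))
    has_sum (\<Sum>g\<in>S. tau_normsq G (\<lambda>H c. quasi_reg G g (\<xi> H) c - \<xi> H c))) (finite_index_subgroups G)"
proof (rule has_sum_finite_sum[OF assms(2)])
  fix g assume "g \<in> S"
  have "(\<lambda>H. 4 * sq_norm_sum (lcosets G H) (\<xi> H)) summable_on finite_index_subgroups G"
    using assms(1) unfolding tau_sum_space_def l2_normsq_def sq_norm_sum_def
    by (intro summable_on_cmult_right) simp
  then have "(\<lambda>H. sq_norm_sum (lcosets G H) (\<lambda>c. quasi_reg G g (\<xi> H) c - \<xi> H c))
      summable_on finite_index_subgroups G"
    by (rule summable_on_comparison_test)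
      (use sq_norm_sum_quasi_reg_diff_le \<open>g \<in> S\<close> assms(3) sq_norm_sum_nonneg
        in \<open>auto simp: finite_index_subgroups_def\<close>)
  then show "((\<lambda>H. sq_norm_sum (lcosets G H) (\<lambda>c. quasi_reg G g (\<xi> H) c - \<xi> H c))
      has_sum tau_normsq G (\<lambda>H c. quasi_reg G g (\<xi> H) c - \<xi> H c)) (finite_index_subgroups G)"
    unfolding tau_normsq_def l2_normsq_def sq_norm_sum_def by (rule has_sum_infsum)
qed

lemma not_property_tau_small_boundary:
  fixes G :: "('g, 'b) monoid_scheme"
  assumes "group G" "\<not> property_tau G" "finite S" "S \<subseteq> carrier G" "\<delta> > 0"
  shows "\<exists>H\<in>finite_index_subgroups G. \<exists>A.
    small_boundary_set (\<lambda>g c. inv\<^bsub>G\<^esub> g <#\<^bsub>G\<^esub> c) S (lcosets G H) \<delta> A"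
proof -
  interpret group G by fact
  obtain \<Xi> where in_space: "\<And>k. \<Xi> k \<in> tau_sum_space G" and unit: "\<And>k. tau_normsq G (\<Xi> k) = 1"
    and almost_invariant: "\<And>g. g \<in> carrier G \<Longrightarrow>
      (\<lambda>k. tau_normsq G (\<lambda>H c. quasi_reg G g (\<Xi> k H) c - \<Xi> k H c)) \<longlonglongrightarrow> 0"
    using assms(2) unfolding property_tau_def by blast
  define \<kappa> where "\<kappa> = \<delta>\<^sup>2 / (8 * (card S + 1))"
  have "\<kappa> > 0" unfolding \<kappa>_def using \<open>\<delta> > 0\<close> by simp
  have "(\<lambda>k. \<Sum>g\<in>S. tau_normsq G (\<lambda>H c. quasi_reg G g (\<Xi> k H) c - \<Xi> k H c)) \<longlonglongrightarrow> (\<Sum>g\<in>S. 0)"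
    using assms(4) by (intro tendsto_sum almost_invariant) auto
  then have "\<forall>\<^sub>F k in sequentially. (\<Sum>g\<in>S. tau_normsq G (\<lambda>H c. quasi_reg G g (\<Xi> k H) c - \<Xi> k H c)) < \<kappa>"
    using \<open>\<kappa> > 0\<close> by (intro order_tendstoD(2)) auto
  then obtain k where k: "(\<Sum>g\<in>S. tau_normsq G (\<lambda>H c. quasi_reg G g (\<Xi> k H) c - \<Xi> k H c)) < \<kappa> * 1"
    using eventually_sequentially by auto
  define \<xi> where "\<xi> = \<Xi> k"
  have "((\<lambda>H. sq_norm_sum (lcosets G H) (\<xi> H)) has_sum 1) (finite_index_subgroups G)"
    using in_space[of k] unit[of k] unfolding tau_sum_space_def tau_normsq_def has_sum_iff
    by (simp add: \<xi>_def l2_normsq_def sq_norm_sum_def)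
  from has_sum_exists_small_ratio[OF this has_sum_quasi_reg_defect[OF in_space assms(3,4)] k]
  obtain H where H: "H \<in> finite_index_subgroups G"
    "(\<Sum>g\<in>S. sq_norm_sum (lcosets G H) (\<lambda>c. quasi_reg G g (\<xi> H) c - \<xi> H c))
      < \<kappa> * sq_norm_sum (lcosets G H) (\<xi> H)"
    unfolding \<xi>_def by blast
  then have subgroup: "subgroup H G" "finite (lcosets G H)" by (auto simp: finite_index_subgroups_def)
  have "quasi_reg_invariant G H (\<lambda>_. 1)" unfolding quasi_reg_invariant_def quasi_reg_def by simp
  then have "l2_inner G H (\<xi> H) (\<lambda>_. 1) = 0"
    using in_space[of k] H(1) unfolding tau_sum_space_def \<xi>_def by blast
  then have mean: "(\<Sum>c\<in>lcosets G H. \<xi> H c) = 0" by (simp add: l2_inner_def)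
  have bij: "bij_betw (\<lambda>c. inv\<^bsub>G\<^esub> g <#\<^bsub>G\<^esub> c) (lcosets G H) (lcosets G H)" if "g \<in> S" for g
    using subgroup(1) by (rule bij_betw_lcosets_translate) (use that assms(4) in auto)
  have "dirichlet_energy (\<lambda>g c. inv\<^bsub>G\<^esub> g <#\<^bsub>G\<^esub> c) S (lcosets G H) (\<xi> H)
      < \<kappa> * sq_norm_sum (lcosets G H) (\<xi> H)"
    using H(2) by (simp add: dirichlet_energy_def quasi_reg_def sq_norm_sum_def)
  from small_boundary_set_of_complex_mean_zero[OF subgroup(2) assms(3) bij mean \<open>\<delta> > 0\<close>
      this[unfolded \<kappa>_def]]
  show ?thesis using H(1) by blast
qed


section \<open>Permutation representations on l_p\<close>

lemma sums_reindex_bij_nonneg: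
  fixes f :: "nat \<Rightarrow> real"
  assumes "bij \<tau>" "\<And>n. f n \<ge> 0" "f sums s"
  shows "(\<lambda>n. f (\<tau> n)) sums s"
proof -
  have "(f has_sum s) UNIV" by (rule sums_nonneg_imp_has_sum[OF assms(3,2)])
  then have "((\<lambda>n. f (\<tau> n)) has_sum s) UNIV" using has_sum_reindex_bij_betw[OF assms(1), of f s] by simp
  then show ?thesis by (rule has_sum_imp_sums)
qed

lemma lp_space_reindex_bij:
  assumes "bij \<tau>" "f \<in> lp_space p"
  shows "(\<lambda>n. f (\<tau> n)) \<in> lp_space p" and "lp_norm p (\<lambda>n. f (\<tau> n)) = lp_norm p f"
proof -
  have "summable (\<lambda>n. cmod (f n) powr p)" using assms(2) by (simp add: lp_space_def)
  then have "(\<lambda>n. cmod (f (\<tau> n)) powr p) sums (\<Sum>n. cmod (f n) powr p)"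
    using sums_reindex_bij_nonneg[OF assms(1), where f = "\<lambda>n. cmod (f n) powr p"]
    by (simp add: summable_sums)
  then show "(\<lambda>n. f (\<tau> n)) \<in> lp_space p" and "lp_norm p (\<lambda>n. f (\<tau> n)) = lp_norm p f"
    by (simp_all add: lp_space_def lp_norm_def sums_iff)
qed

lemma lp_isometry_reindex_bij:
  assumes "bij \<tau>"
  shows "lp_isometry p (\<lambda>f n. f (\<tau> n))"
proof -
  have "bij_betw (\<lambda>f n. f (\<tau> n)) (lp_space p) (lp_space p)"
  proof (rule bij_betw_byWitness[where f' = "\<lambda>f n. f (inv_into UNIV \<tau> n)"])
    show "\<forall>f\<in>lp_space p. (\<lambda>n. f (\<tau> (inv_into UNIV \<tau> n))) = f" "\<forall>f\<in>lp_space p. (\<lambda>n. f (inv_into UNIV \<tau> (\<tau> n))) = f"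
      using assms by (simp_all add: bij_def surj_f_inv_f inv_f_f)
    show "(\<lambda>f n. f (\<tau> n)) ` lp_space p \<subseteq> lp_space p" "(\<lambda>f n. f (inv_into UNIV \<tau> n)) ` lp_space p \<subseteq> lp_space p"
      using assms bij_imp_bij_inv[OF assms] by (auto intro: lp_space_reindex_bij)
  qed
  then show ?thesis unfolding lp_isometry_def using lp_space_reindex_bij(2)[OF assms] by simp
qed

lemma lp_pairing_unit_vec: "lp_pairing (unit_vec k) h = h k"
proof -
  have "(\<lambda>n. unit_vec k n * h n) = (\<lambda>n. if n = k then h n else 0)" by (auto simp: unit_vec_def)
  then show ?thesis using sums_single[of k h] by (simp add: lp_pairing_def sums_iff)
qed

definition permutation_rep ::
  "('g, 'b) monoid_scheme \<Rightarrow> ('g \<Rightarrow> nat \<Rightarrow> nat) \<Rightarrow> 'g \<Rightarrow> (nat \<Rightarrow> complex) \<Rightarrow> (nat \<Rightarrow> complex)" where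
  "permutation_rep G \<tau> g f = (\<lambda>n. f (\<tau> (inv\<^bsub>G\<^esub> g) n))"

locale nat_action = group G for G :: "('g, 'b) monoid_scheme" (structure) +
  fixes \<tau> :: "'g \<Rightarrow> nat \<Rightarrow> nat"
  assumes action_mult: "g \<in> carrier G \<Longrightarrow> h \<in> carrier G \<Longrightarrow> \<tau> (g \<otimes> h) n = \<tau> g (\<tau> h n)"
    and action_one: "\<tau> \<one> n = n"
begin

lemma action_inv_cancel:
  assumes "g \<in> carrier G"
  shows "\<tau> g (\<tau> (inv g) n) = n" "\<tau> (inv g) (\<tau> g n) = n"
  using action_mult[of g "inv g" n] action_mult[of "inv g" g n] assms by (simp_all add: action_one)

lemma bij_action: "g \<in> carrier G \<Longrightarrow> bij (\<tau> g)"
  by (rule bij_betw_byWitness[where f' = "\<tau> (inv g)"]) (auto simp: action_inv_cancel)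

lemma orth_rep_permutation_rep: "orth_rep G p (permutation_rep G \<tau>)"
  unfolding orth_rep_def permutation_rep_def
  by (auto simp: lp_isometry_reindex_bij bij_action inv_mult_group action_mult)

lemma dual_rep_permutation_rep:
  assumes "g \<in> carrier G"
  shows "dual_rep G (permutation_rep G \<tau>) g h = permutation_rep G \<tau> g h"
proof
  fix n
  have "unit_vec n (\<tau> g m) = unit_vec (\<tau> (inv g) n) m" for m
    using action_inv_cancel[OF assms] unfolding unit_vec_def by metis
  then have "permutation_rep G \<tau> (inv g) (unit_vec n) = unit_vec (\<tau> (inv g) n)"
    using assms by (simp add: permutation_rep_def)
  then show "dual_rep G (permutation_rep G \<tau>) g h n = permutation_rep G \<tau> g h n"
    by (simp add: dual_rep_def lp_pairing_unit_vec permutation_rep_def)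
qed

end

definition enum_action :: "'i set \<Rightarrow> ('g \<Rightarrow> 'i \<Rightarrow> 'i) \<Rightarrow> 'g \<Rightarrow> nat \<Rightarrow> nat" where
  "enum_action I act g n = to_nat_on I (act g (from_nat_into I n))"

locale countable_action = group G for G :: "('g, 'b) monoid_scheme" (structure) +
  fixes I :: "'i set" and act :: "'g \<Rightarrow> 'i \<Rightarrow> 'i"
  assumes countable: "countable I" and infinite: "infinite I"
    and act_closed: "g \<in> carrier G \<Longrightarrow> i \<in> I \<Longrightarrow> act g i \<in> I"
    and act_mult: "g \<in> carrier G \<Longrightarrow> h \<in> carrier G \<Longrightarrow> i \<in> I \<Longrightarrow> act g (act h i) = act (g \<otimes> h) i"
    and act_one: "i \<in> I \<Longrightarrow> act \<one> i = i"
begin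

lemma from_nat_into_mem: "from_nat_into I n \<in> I"
  using infinite by (intro from_nat_into) auto

lemma from_nat_into_enum_action:
  "g \<in> carrier G \<Longrightarrow> from_nat_into I (enum_action I act g n) = act g (from_nat_into I n)"
  unfolding enum_action_def using countable act_closed from_nat_into_mem by simp

sublocale nat_action G "enum_action I act"
proof
  show "enum_action I act (g \<otimes> h) n = enum_action I act g (enum_action I act h n)"
    if "g \<in> carrier G" "h \<in> carrier G" for g h n
    using that by (simp add: enum_action_def countable act_closed act_mult from_nat_into_mem)
  show "enum_action I act \<one> n = n" for n
    using countable infinite by (simp add: enum_action_def act_one from_nat_into_mem)
qed

lemma permutation_rep_enum_action:
  "g \<in> carrier G \<Longrightarrow> permutation_rep G (enum_action I act) g (\<lambda>n. \<psi> (from_nat_into I n))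
    = (\<lambda>n. \<psi> (act (inv g) (from_nat_into I n)))"
  by (simp add: permutation_rep_def from_nat_into_enum_action)

lemma sums_finite_support:
  fixes \<psi> :: "'i \<Rightarrow> 'a::{t2_space, topological_comm_monoid_add}"
  assumes "finite Y" "Y \<subseteq> I" "\<And>i. i \<in> I \<Longrightarrow> i \<notin> Y \<Longrightarrow> \<psi> i = 0"
  shows "(\<lambda>n. \<psi> (from_nat_into I n)) sums (\<Sum>i\<in>Y. \<psi> i)"
proof -
  have "(\<lambda>n. \<psi> (from_nat_into I n)) sums (\<Sum>n\<in>to_nat_on I ` Y. \<psi> (from_nat_into I n))"
  proof (rule sums_finite)
    fix n assume "n \<notin> to_nat_on I ` Y"
    then have "from_nat_into I n \<notin> Y" using countable infinite by (metis image_eqI to_nat_on_from_nat_into_infinite)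
    then show "\<psi> (from_nat_into I n) = 0" using assms(3) from_nat_into_mem by blast
  qed (use assms(1) in simp)
  also have "\<dots> = (\<Sum>i\<in>Y. \<psi> (from_nat_into I (to_nat_on I i)))"
    using assms(2) countable by (subst sum.reindex) (auto intro: inj_on_subset[OF inj_on_to_nat_on])
  also have "\<dots> = (\<Sum>i\<in>Y. \<psi> i)"
    using assms(2) countable by (intro sum.cong) auto
  finally show ?thesis .
qed

lemma lp_norm_finite_support:
  assumes "finite Y" "Y \<subseteq> I" "\<And>i. i \<in> I \<Longrightarrow> i \<notin> Y \<Longrightarrow> \<psi> i = 0" "p > 0"
  shows "(\<lambda>n. \<psi> (from_nat_into I n)) \<in> lp_space p"
    and "lp_norm p (\<lambda>n. \<psi> (from_nat_into I n)) = (\<Sum>i\<in>Y. cmod (\<psi> i) powr p) powr (1 / p)"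
proof -
  have "(\<lambda>n. cmod (\<psi> (from_nat_into I n)) powr p) sums (\<Sum>i\<in>Y. cmod (\<psi> i) powr p)"
    using assms by (intro sums_finite_support[where \<psi> = "\<lambda>i. cmod (\<psi> i) powr p"]) auto
  then show "(\<lambda>n. \<psi> (from_nat_into I n)) \<in> lp_space p"
    and "lp_norm p (\<lambda>n. \<psi> (from_nat_into I n)) = (\<Sum>i\<in>Y. cmod (\<psi> i) powr p) powr (1 / p)"
    by (auto simp: lp_space_def lp_norm_def sums_iff)
qed

text \<open>Invariant vectors are constant on orbits.\<close>

lemma in_lp_prime_finite_support:
  assumes "finite Y" "Y \<subseteq> I" "\<And>i. i \<in> I \<Longrightarrow> i \<notin> Y \<Longrightarrow> \<psi> i = 0" "p > 0"
    and orbit: "\<And>i. i \<in> Y \<Longrightarrow> \<exists>g\<in>carrier G. i = act g i\<^sub>0" and "i\<^sub>0 \<in> I"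
    and zero_sum: "(\<Sum>i\<in>Y. \<psi> i) = 0"
  shows "(\<lambda>n. \<psi> (from_nat_into I n)) \<in> lp_prime G p (permutation_rep G (enum_action I act))"
  unfolding lp_prime_def
proof (intro CollectI conjI ballI impI)
  show "(\<lambda>n. \<psi> (from_nat_into I n)) \<in> lp_space p" by (rule lp_norm_finite_support(1)[OF assms(1-4)])
  fix h assume h: "\<forall>g\<in>carrier G. dual_rep G (permutation_rep G (enum_action I act)) g h = h"
  have invariant: "h (enum_action I act g n) = h n" if "g \<in> carrier G" for g n
  proof -
    have "dual_rep G (permutation_rep G (enum_action I act)) (inv g) h = h" using h that by simp
    moreover have "dual_rep G (permutation_rep G (enum_action I act)) (inv g) h
        = permutation_rep G (enum_action I act) (inv g) h"
      using that by (simp add: dual_rep_permutation_rep)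
    ultimately have "permutation_rep G (enum_action I act) (inv g) h = h" by simp
    then have "(\<lambda>n. h (enum_action I act g n)) = h" using that by (simp add: permutation_rep_def)
    then show ?thesis by (rule fun_cong)
  qed
  have h_constant: "h (to_nat_on I i) = h (to_nat_on I i\<^sub>0)" if i: "i \<in> Y" for i
  proof -
    obtain g where "g \<in> carrier G" "i = act g i\<^sub>0" using orbit[OF i] by blast
    then have "to_nat_on I i = enum_action I act g (to_nat_on I i\<^sub>0)"
      using countable \<open>i\<^sub>0 \<in> I\<close> by (simp add: enum_action_def)
    then show ?thesis using invariant \<open>g \<in> carrier G\<close> by simp
  qed
  have "(\<lambda>n. \<psi> (from_nat_into I n) * h n) sums (\<Sum>i\<in>Y. \<psi> i * h (to_nat_on I i))"
    using sums_finite_support[where \<psi> = "\<lambda>i. \<psi> i * h (to_nat_on I i)", OF assms(1,2)] assms(3)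
      countable infinite by simp
  also have "(\<Sum>i\<in>Y. \<psi> i * h (to_nat_on I i)) = (\<Sum>i\<in>Y. \<psi> i) * h (to_nat_on I i\<^sub>0)"
    unfolding sum_distrib_right by (intro sum.cong refl) (metis h_constant)
  finally show "lp_pairing (\<lambda>n. \<psi> (from_nat_into I n)) h = 0"
    using zero_sum by (simp add: lp_pairing_def sums_iff)
qed

end


section \<open>Almost invariant vectors from sets of small boundary\<close>

definition centered_indicator :: "'x set \<Rightarrow> 'x set \<Rightarrow> 'x \<Rightarrow> real" where
  "centered_indicator X A c = indicator A c - card A / card X"

lemma sum_indicator_subset:
  assumes "finite X" "A \<subseteq> X"
  shows "(\<Sum>c\<in>X. indicator A c :: 'a::semiring_1) = of_nat (card A)"
  using assms by (simp add: indicator_def sum.If_cases Int_absorb1)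

lemma sum_centered_indicator:
  assumes "finite X" "A \<subseteq> X"
  shows "(\<Sum>c\<in>X. centered_indicator X A c) = 0"
proof (cases "X = {}")
  case False
  then show ?thesis
    using assms by (simp add: centered_indicator_def sum_subtractf sum_indicator_subset)
qed simp

lemma abs_centered_indicator_diff:
  assumes "c \<in> X"
  shows "\<bar>centered_indicator X A (\<sigma> g c) - centered_indicator X A c\<bar> = indicator (edge_boundary \<sigma> X A g) c"
  using assms unfolding centered_indicator_def edge_boundary_def indicator_def by auto

lemma sum_powr_centered_indicator_ge:
  assumes "finite X" "A \<subseteq> X" "2 * card A \<le> card X" "p > 0"
  shows "card A / 2 powr p \<le> (\<Sum>c\<in>X. \<bar>centered_indicator X A c\<bar> powr p)"
proof -
  define ratio where "ratio = real (card A) / card X"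
  have half: "ratio \<le> 1 / 2"
    unfolding ratio_def using assms(3) by (cases "card X = 0") (simp_all add: field_simps)
  have lower: "1 / 2 powr p \<le> \<bar>centered_indicator X A c\<bar> powr p" if "c \<in> A" for c
  proof -
    have "centered_indicator X A c = 1 - ratio"
      using that by (simp add: centered_indicator_def ratio_def)
    then have "1 / 2 \<le> \<bar>centered_indicator X A c\<bar>" using half by linarith
    then have "(1 / 2) powr p \<le> \<bar>centered_indicator X A c\<bar> powr p"
      using \<open>p > 0\<close> by (intro powr_mono2) simp_all
    then show ?thesis by (simp add: powr_divide)
  qed
  have "card A / 2 powr p = (\<Sum>c\<in>A. 1 / 2 powr p)" by simp
  also have "\<dots> \<le> (\<Sum>c\<in>A. \<bar>centered_indicator X A c\<bar> powr p)" by (rule sum_mono) (rule lower)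
  also have "\<dots> \<le> (\<Sum>c\<in>X. \<bar>centered_indicator X A c\<bar> powr p)"
    using assms(1,2) by (rule sum_mono2) simp
  finally show ?thesis .
qed

lemma sum_powr_centered_indicator_pos:
  assumes "finite X" "A \<subseteq> X" "A \<noteq> {}" "2 * card A \<le> card X" "p > 0"
  shows "(\<Sum>c\<in>X. \<bar>centered_indicator X A c\<bar> powr p) > 0"
proof -
  have "card A > 0" using finite_subset[OF assms(2,1)] assms(3) by (simp add: card_gt_0_iff)
  then have "card A / 2 powr p > 0" by simp
  with sum_powr_centered_indicator_ge[OF assms(1,2,4,5)] show ?thesis by linarith
qed

lemma powr_divide_root:
  fixes x L p :: real
  assumes "x \<ge> 0" "L > 0" "p > 0"
  shows "(x / L powr (1 / p)) powr p = x powr p / L"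
  using assms by (simp add: powr_divide powr_powr)

lemma powr_mult_root:
  fixes a x p :: real
  assumes "a > 0" "x \<ge> 0" "p > 0"
  shows "(a powr p * x) powr (1 / p) = a * x powr (1 / p)"
  using assms by (simp add: powr_mult powr_powr)

definition normalized_centered_indicator :: "real \<Rightarrow> 'x set \<Rightarrow> 'x set \<Rightarrow> 'x \<Rightarrow> real" where
  "normalized_centered_indicator p X A c =
     centered_indicator X A c / (\<Sum>x\<in>X. \<bar>centered_indicator X A x\<bar> powr p) powr (1 / p)"

lemma sum_normalized_centered_indicator:
  assumes "finite X" "A \<subseteq> X"
  shows "(\<Sum>c\<in>X. normalized_centered_indicator p X A c) = 0"
  using sum_centered_indicator[OF assms]
  by (simp add: normalized_centered_indicator_def flip: sum_divide_distrib)

lemma sum_powr_normalized_centered_indicator: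
  assumes "finite X" "A \<subseteq> X" "A \<noteq> {}" "2 * card A \<le> card X" "p > 0"
  shows "(\<Sum>c\<in>X. \<bar>normalized_centered_indicator p X A c\<bar> powr p) = 1"
proof -
  define L where "L = (\<Sum>x\<in>X. \<bar>centered_indicator X A x\<bar> powr p)"
  have "L > 0"
    using sum_powr_centered_indicator_pos[OF assms] unfolding L_def .
  have "(\<Sum>c\<in>X. \<bar>normalized_centered_indicator p X A c\<bar> powr p)
      = (\<Sum>c\<in>X. \<bar>centered_indicator X A c\<bar> powr p / L)"
    using \<open>L > 0\<close> \<open>p > 0\<close>
    by (intro sum.cong refl) (simp add: normalized_centered_indicator_def abs_divide powr_divide_root
        flip: L_def)
  also have "\<dots> = 1" using \<open>L > 0\<close> by (simp add: L_def[symmetric] flip: sum_divide_distrib)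
  finally show ?thesis .
qed

lemma sum_powr_normalized_centered_indicator_diff_le:
  assumes "finite X" "A \<subseteq> X" "A \<noteq> {}" "2 * card A \<le> card X" "p > 0"
    and maps: "\<And>c. c \<in> X \<Longrightarrow> \<sigma> g c \<in> X"
  shows "(\<Sum>c\<in>X. \<bar>normalized_centered_indicator p X A (\<sigma> g c) - normalized_centered_indicator p X A c\<bar> powr p)
    \<le> 2 powr p * (card (edge_boundary \<sigma> X A g) / card A)"
proof -
  define L where "L = (\<Sum>x\<in>X. \<bar>centered_indicator X A x\<bar> powr p)"
  define E where "E = edge_boundary \<sigma> X A g"
  have "card A > 0" using finite_subset[OF assms(2,1)] assms(3) by (simp add: card_gt_0_iff)
  have L_ge: "card A / 2 powr p \<le> L"
    unfolding L_def by (rule sum_powr_centered_indicator_ge[OF assms(1,2,4,5)])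
  have "L > 0" using sum_powr_centered_indicator_pos[OF assms(1-5)] unfolding L_def .
  have "\<bar>normalized_centered_indicator p X A (\<sigma> g c) - normalized_centered_indicator p X A c\<bar> powr p
      = indicator E c / L" if "c \<in> X" for c
  proof -
    have "\<bar>normalized_centered_indicator p X A (\<sigma> g c) - normalized_centered_indicator p X A c\<bar>
        = indicator E c / L powr (1 / p)"
      unfolding normalized_centered_indicator_def L_def[symmetric] E_def
      by (simp add: abs_divide abs_centered_indicator_diff[OF that] flip: diff_divide_distrib)
    then show ?thesis using \<open>L > 0\<close> \<open>p > 0\<close> by (cases "c \<in> E") (simp_all add: powr_divide_root)
  qed
  then have "(\<Sum>c\<in>X. \<bar>normalized_centered_indicator p X A (\<sigma> g c) - normalized_centered_indicator p X A c\<bar> powr p)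
      = (\<Sum>c\<in>X. indicator E c) / L"
    by (simp add: sum_divide_distrib)
  also have "\<dots> = card E / L"
    by (subst sum_indicator_subset[OF assms(1)]) (auto simp: E_def edge_boundary_def)
  also have "\<dots> \<le> card E / (card A / 2 powr p)"
    using L_ge \<open>card A > 0\<close> \<open>L > 0\<close> by (intro divide_left_mono) auto
  also have "\<dots> = 2 powr p * (card E / card A)" by simp
  finally show ?thesis unfolding E_def .
qed

context countable_action
begin

lemma lp_norm_defect_finite_support:
  assumes "finite Y" "Y \<subseteq> I" "p > 0" "g \<in> carrier G"
    and invariant: "\<And>g i. g \<in> carrier G \<Longrightarrow> i \<in> Y \<Longrightarrow> act g i \<in> Y"
    and support: "\<And>i. i \<in> I \<Longrightarrow> i \<notin> Y \<Longrightarrow> \<psi> i = 0"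
  shows "lp_norm p (\<lambda>n. permutation_rep G (enum_action I act) g (\<lambda>n. \<psi> (from_nat_into I n)) n
      - \<psi> (from_nat_into I n))
    = (\<Sum>i\<in>Y. cmod (\<psi> (act (inv g) i) - \<psi> i) powr p) powr (1 / p)"
proof -
  have "\<psi> (act (inv g) i) - \<psi> i = 0" if "i \<in> I" "i \<notin> Y" for i
  proof -
    have "act g (act (inv g) i) = i" using that \<open>g \<in> carrier G\<close> by (simp add: act_mult act_one)
    then have "act (inv g) i \<notin> Y" using invariant[of g "act (inv g) i"] \<open>g \<in> carrier G\<close> that by auto
    then show ?thesis using that \<open>g \<in> carrier G\<close> support act_closed by simp
  qed
  from lp_norm_finite_support(2)[OF assms(1,2) this \<open>p > 0\<close>] show ?thesis
    using \<open>g \<in> carrier G\<close> by (simp add: permutation_rep_enum_action)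
qed

lemma centered_indicator_unit_vector:
  assumes "finite Y" "Y \<subseteq> I" "p > 0"
    and invariant: "\<And>g i. g \<in> carrier G \<Longrightarrow> i \<in> Y \<Longrightarrow> act g i \<in> Y"
    and transitive: "\<And>i j. i \<in> Y \<Longrightarrow> j \<in> Y \<Longrightarrow> \<exists>g\<in>carrier G. j = act g i"
    and B: "B \<subseteq> Y" "B \<noteq> {}" "2 * card B \<le> card Y"
  shows "\<exists>f. f \<in> lp_prime G p (permutation_rep G (enum_action I act)) \<and> lp_norm p f = 1 \<and>
    (\<forall>g\<in>carrier G. lp_norm p (\<lambda>n. permutation_rep G (enum_action I act) g f n - f n)
       \<le> 2 * (card (edge_boundary (\<lambda>g. act (inv g)) Y B g) / card B) powr (1 / p))"
proof -
  define \<phi> where "\<phi> = normalized_centered_indicator p Y B"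
  define \<psi> where "\<psi> i = (if i \<in> Y then complex_of_real (\<phi> i) else 0)" for i
  have support: "\<psi> i = 0" if "i \<in> I" "i \<notin> Y" for i using that by (simp add: \<psi>_def)
  obtain i\<^sub>0 where "i\<^sub>0 \<in> B" using B(2) by blast
  have "(\<lambda>n. \<psi> (from_nat_into I n)) \<in> lp_prime G p (permutation_rep G (enum_action I act))"
  proof (rule in_lp_prime_finite_support[where \<psi> = \<psi>, OF assms(1,2) support \<open>p > 0\<close>, where i\<^sub>0 = i\<^sub>0])
    show "i\<^sub>0 \<in> I" "\<And>i. i \<in> Y \<Longrightarrow> \<exists>g\<in>carrier G. i = act g i\<^sub>0"
      using \<open>i\<^sub>0 \<in> B\<close> B(1) assms(2) transitive by auto
    show "(\<Sum>i\<in>Y. \<psi> i) = 0"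
      using sum_normalized_centered_indicator[OF assms(1) B(1), of p]
      by (simp add: \<psi>_def \<phi>_def flip: of_real_sum)
  qed
  moreover have "lp_norm p (\<lambda>n. \<psi> (from_nat_into I n)) = 1"
    using lp_norm_finite_support(2)[where \<psi> = \<psi>, OF assms(1,2) support \<open>p > 0\<close>]
      sum_powr_normalized_centered_indicator[OF assms(1) B \<open>p > 0\<close>]
    by (simp add: \<psi>_def \<phi>_def)
  moreover have "lp_norm p (\<lambda>n. permutation_rep G (enum_action I act) g (\<lambda>n. \<psi> (from_nat_into I n)) n
      - \<psi> (from_nat_into I n))
      \<le> 2 * (card (edge_boundary (\<lambda>g. act (inv g)) Y B g) / card B) powr (1 / p)"
    if "g \<in> carrier G" for g
  proof -
    define r where "r = card (edge_boundary (\<lambda>g. act (inv g)) Y B g) / card B"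
    have "(\<Sum>i\<in>Y. cmod (\<psi> (act (inv g) i) - \<psi> i) powr p)
        = (\<Sum>i\<in>Y. \<bar>\<phi> (act (inv g) i) - \<phi> i\<bar> powr p)"
      using invariant[of "inv g"] that by (intro sum.cong refl) (simp add: \<psi>_def flip: of_real_diff)
    also have "\<dots> \<le> 2 powr p * r"
      unfolding \<phi>_def r_def using invariant[of "inv g"] that
      by (intro sum_powr_normalized_centered_indicator_diff_le[OF assms(1) B \<open>p > 0\<close>]) auto
    finally have "(\<Sum>i\<in>Y. cmod (\<psi> (act (inv g) i) - \<psi> i) powr p) powr (1 / p) \<le> (2 powr p * r) powr (1 / p)"
      using \<open>p > 0\<close> by (intro powr_mono2 sum_nonneg) auto
    also have "\<dots> = 2 * r powr (1 / p)"
      by (rule powr_mult_root) (use \<open>p > 0\<close> in \<open>simp_all add: r_def\<close>)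
    finally have "(\<Sum>i\<in>Y. cmod (\<psi> (act (inv g) i) - \<psi> i) powr p) powr (1 / p) \<le> 2 * r powr (1 / p)" .
    moreover have "lp_norm p (\<lambda>n. permutation_rep G (enum_action I act) g (\<lambda>n. \<psi> (from_nat_into I n)) n
        - \<psi> (from_nat_into I n)) = (\<Sum>i\<in>Y. cmod (\<psi> (act (inv g) i) - \<psi> i) powr p) powr (1 / p)"
      by (rule lp_norm_defect_finite_support[OF assms(1-3) that invariant support])
    ultimately show ?thesis unfolding r_def by linarith
  qed
  ultimately show ?thesis by (intro exI[of _ "\<lambda>n. \<psi> (from_nat_into I n)"]) blast
qed

end


definition lcosets_union_action :: "('g, 'b) monoid_scheme \<Rightarrow> 'g \<Rightarrow> nat \<times> 'g set \<Rightarrow> nat \<times> 'g set" where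
  "lcosets_union_action G g i = (fst i, g <#\<^bsub>G\<^esub> snd i)"

lemma countable_action_lcosets:
  fixes G :: "('g, 'b) monoid_scheme" and H :: "nat \<Rightarrow> 'g set"
  assumes "group G" "\<And>k. H k \<in> finite_index_subgroups G"
  shows "countable_action G (SIGMA k:UNIV. lcosets G (H k)) (lcosets_union_action G)"
proof -
  interpret group G by fact
  have subgroup: "subgroup (H k) G" and finite: "finite (lcosets G (H k))" for k
    using assms(2) unfolding finite_index_subgroups_def by auto
  have "H k \<in> lcosets G (H k)" for k
    using lcos_mult_one[OF subgroup.subset[OF subgroup]] unfolding lcosets_def by force
  then have "fst ` (SIGMA k:UNIV. lcosets G (H k)) = UNIV" by force
  then have "infinite (SIGMA k:UNIV. lcosets G (H k))" by (metis finite_imageI infinite_UNIV_nat)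
  moreover have "countable (SIGMA k:UNIV. lcosets G (H k))"
    using finite by (intro countable_SIGMA) (auto intro: countable_finite)
  moreover note lcosets_translate_closed[OF subgroup] lcosets_translate_mult[OF subgroup]
    lcosets_translate_one[OF subgroup]
  ultimately show ?thesis by unfold_locales (auto simp: lcosets_union_action_def)
qed

lemma boundary_ratio_tendsto_zero:
  assumes small: "\<And>k. small_boundary_set \<sigma> (S k) (X k) (\<delta> k) (B k)"
    and "\<And>k. finite (S k)" "\<And>k. finite (X k)" "\<delta> \<longlonglongrightarrow> 0"
    and "\<forall>\<^sub>F k in sequentially. g \<in> S k"
  shows "(\<lambda>k. card (edge_boundary \<sigma> (X k) (B k) g) / card (B k)) \<longlonglongrightarrow> 0"
proof (rule tendsto_sandwich[OF _ _ tendsto_const \<open>\<delta> \<longlonglongrightarrow> 0\<close>])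
  have "card (edge_boundary \<sigma> (X k) (B k) g) / card (B k) \<le> \<delta> k" if "g \<in> S k" for k
  proof -
    have "real (card (edge_boundary \<sigma> (X k) (B k) g)) \<le> (\<Sum>g\<in>S k. real (card (edge_boundary \<sigma> (X k) (B k) g)))"
      using that \<open>finite (S k)\<close> by (intro member_le_sum) auto
    also have "\<dots> < \<delta> k * card (B k)" using small[of k] by (simp add: small_boundary_set_def)
    finally have "real (card (edge_boundary \<sigma> (X k) (B k) g)) \<le> \<delta> k * card (B k)" by simp
    moreover have "card (B k) > 0"
      using small[of k] finite_subset \<open>finite (X k)\<close> by (auto simp: small_boundary_set_def card_gt_0_iff)
    ultimately show ?thesis by (simp add: pos_divide_le_eq)
  qed
  with \<open>\<forall>\<^sub>F k in sequentially. g \<in> S k\<close>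
  show "\<forall>\<^sub>F k in sequentially. card (edge_boundary \<sigma> (X k) (B k) g) / card (B k) \<le> \<delta> k"
    by (rule eventually_mono)
qed simp

lemma lcosets_block_unit_vector:
  fixes G :: "('g, 'b) monoid_scheme" and H :: "nat \<Rightarrow> 'g set"
  assumes "group G" "p > 0" and H: "\<And>k. H k \<in> finite_index_subgroups G"
    and B: "B \<subseteq> lcosets G (H k)" "B \<noteq> {}" "2 * card B \<le> card (lcosets G (H k))"
  defines "\<pi> \<equiv> permutation_rep G (enum_action (SIGMA k:UNIV. lcosets G (H k)) (lcosets_union_action G))"
  shows "\<exists>f. f \<in> lp_prime G p \<pi> \<and> lp_norm p f = 1 \<and> (\<forall>g\<in>carrier G.
    lp_norm p (\<lambda>n. \<pi> g f n - f n)
      \<le> 2 * (card (edge_boundary (\<lambda>g c. inv\<^bsub>G\<^esub> g <#\<^bsub>G\<^esub> c) (lcosets G (H k)) B g) / card B) powr (1 / p))"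
proof -
  interpret group G by fact
  define act where "act = lcosets_union_action G"
  interpret countable_action G "SIGMA k:UNIV. lcosets G (H k)" act
    unfolding act_def by (rule countable_action_lcosets[OF assms(1) H])
  have subgroup: "subgroup (H k) G" "finite (lcosets G (H k))"
    using H unfolding finite_index_subgroups_def by auto
  define Y where "Y = {k} \<times> lcosets G (H k)"
  have "finite Y" "Y \<subseteq> (SIGMA k:UNIV. lcosets G (H k))" unfolding Y_def using subgroup by auto
  moreover have "act g i \<in> Y" if "g \<in> carrier G" "i \<in> Y" for g i
    using that subgroup unfolding Y_def act_def lcosets_union_action_def
    by (auto intro: lcosets_translate_closed)
  moreover have "\<exists>g\<in>carrier G. j = act g i" if "i \<in> Y" "j \<in> Y" for i j
    using that lcosets_translate_transitive[OF subgroup(1)]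
    unfolding Y_def act_def lcosets_union_action_def by force
  moreover have "{k} \<times> B \<subseteq> Y" "{k} \<times> B \<noteq> {}" "2 * card ({k} \<times> B) \<le> card Y"
    using B unfolding Y_def by (auto simp: card_cartesian_product_singleton)
  ultimately obtain f where f: "f \<in> lp_prime G p \<pi>" "lp_norm p f = 1"
    "\<And>g. g \<in> carrier G \<Longrightarrow> lp_norm p (\<lambda>n. \<pi> g f n - f n)
      \<le> 2 * (card (edge_boundary (\<lambda>g. act (inv\<^bsub>G\<^esub> g)) Y ({k} \<times> B) g) / card ({k} \<times> B)) powr (1 / p)"
    using centered_indicator_unit_vector[of Y p "{k} \<times> B"] \<open>p > 0\<close> unfolding \<pi>_def act_def by blast
  have "edge_boundary (\<lambda>g. act (inv\<^bsub>G\<^esub> g)) Y ({k} \<times> B) g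
      = Pair k ` edge_boundary (\<lambda>g c. inv\<^bsub>G\<^esub> g <#\<^bsub>G\<^esub> c) (lcosets G (H k)) B g" for g
    unfolding Y_def act_def lcosets_union_action_def edge_boundary_def by auto
  then have card_eq: "card (edge_boundary (\<lambda>g. act (inv\<^bsub>G\<^esub> g)) Y ({k} \<times> B) g) / card ({k} \<times> B)
      = card (edge_boundary (\<lambda>g c. inv\<^bsub>G\<^esub> g <#\<^bsub>G\<^esub> c) (lcosets G (H k)) B g) / card B" for g
    by (simp add: card_image inj_on_def card_cartesian_product_singleton)
  show ?thesis
  proof (intro exI conjI ballI)
    show "f \<in> lp_prime G p \<pi>" "lp_norm p f = 1" by (fact f(1), fact f(2))
    show "lp_norm p (\<lambda>n. \<pi> g f n - f n)
      \<le> 2 * (card (edge_boundary (\<lambda>g c. inv\<^bsub>G\<^esub> g <#\<^bsub>G\<^esub> c) (lcosets G (H k)) B g) / card B) powr (1 / p)"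
      if "g \<in> carrier G" for g
      using f(3)[OF that] unfolding card_eq .
  qed
qed

lemma not_property_T_lp_of_small_boundary_sets:
  fixes G :: "('g, 'b) monoid_scheme" and H :: "nat \<Rightarrow> 'g set" and B :: "nat \<Rightarrow> 'g set set"
  assumes "group G" "p > 0"
    and H: "\<And>k. H k \<in> finite_index_subgroups G"
    and B: "\<And>k. small_boundary_set (\<lambda>g c. inv\<^bsub>G\<^esub> g <#\<^bsub>G\<^esub> c) (S k) (lcosets G (H k)) (\<delta> k) (B k)"
    and "\<And>k. finite (S k)" and "\<delta> \<longlonglongrightarrow> 0" and exhausting: "\<And>g. g \<in> carrier G \<Longrightarrow> \<forall>\<^sub>F k in sequentially. g \<in> S k"
  shows "\<not> property_T_lp G p"
proof -
  interpret countable_action G "SIGMA k:UNIV. lcosets G (H k)" "lcosets_union_action G"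
    by (rule countable_action_lcosets[OF assms(1) H])
  define \<pi> where "\<pi> = permutation_rep G (enum_action (SIGMA k:UNIV. lcosets G (H k)) (lcosets_union_action G))"
  define ratio where "ratio g k = card (edge_boundary (\<lambda>g c. inv\<^bsub>G\<^esub> g <#\<^bsub>G\<^esub> c) (lcosets G (H k)) (B k) g)
    / card (B k)" for g k
  have "\<exists>f. f \<in> lp_prime G p \<pi> \<and> lp_norm p f = 1 \<and>
      (\<forall>g\<in>carrier G. lp_norm p (\<lambda>n. \<pi> g f n - f n) \<le> 2 * ratio g k powr (1 / p))" for k
  proof -
    from B[of k] have "B k \<subseteq> lcosets G (H k)" "B k \<noteq> {}" "2 * card (B k) \<le> card (lcosets G (H k))"
      by (simp_all add: small_boundary_set_def)
    from lcosets_block_unit_vector[where H = H and k = k, OF assms(1,2) H this]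
    show ?thesis unfolding \<pi>_def ratio_def .
  qed
  then obtain F where F: "\<And>k. F k \<in> lp_prime G p \<pi>" "\<And>k. lp_norm p (F k) = 1"
    and F_defect: "\<And>k g. g \<in> carrier G \<Longrightarrow> lp_norm p (\<lambda>n. \<pi> g (F k) n - F k n) \<le> 2 * ratio g k powr (1 / p)"
    by metis
  have "(\<lambda>k. lp_norm p (\<lambda>n. \<pi> g (F k) n - F k n)) \<longlonglongrightarrow> 0" if "g \<in> carrier G" for g
  proof (rule tendsto_sandwich[OF _ _ tendsto_const])
    have "finite (lcosets G (H k))" for k using H by (simp add: finite_index_subgroups_def)
    from B \<open>\<And>k. finite (S k)\<close> this \<open>\<delta> \<longlonglongrightarrow> 0\<close> exhausting[OF that]
    have "(\<lambda>k. ratio g k) \<longlonglongrightarrow> 0" unfolding ratio_def by (rule boundary_ratio_tendsto_zero)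
    then have "(\<lambda>k. ratio g k powr (1 / p)) \<longlonglongrightarrow> 0"
      by (rule tendsto_zero_powrI[OF _ tendsto_const]) (use \<open>p > 0\<close> in \<open>simp_all add: ratio_def\<close>)
    then show "(\<lambda>k. 2 * ratio g k powr (1 / p)) \<longlonglongrightarrow> 0" by (rule tendsto_mult_right_zero)
    show "\<forall>\<^sub>F k in sequentially. lp_norm p (\<lambda>n. \<pi> g (F k) n - F k n) \<le> 2 * ratio g k powr (1 / p)"
      using F_defect[OF that] by (intro always_eventually allI)
  qed (simp add: lp_norm_def)
  then have "\<exists>f. (\<forall>k. f k \<in> lp_prime G p \<pi> \<and> lp_norm p (f k) = 1) \<and>
      (\<forall>g\<in>carrier G. (\<lambda>k. lp_norm p (\<lambda>n. \<pi> g (f k) n - f k n)) \<longlonglongrightarrow> 0)"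
    using F by (intro exI[of _ F]) blast
  moreover have "orth_rep G p \<pi>" unfolding \<pi>_def by (rule orth_rep_permutation_rep)
  ultimately show ?thesis unfolding property_T_lp_def by blast
qed

theorem proposition1p10:
  fixes G :: "('g, 'b) monoid_scheme" and p :: real
  assumes "group G"
    and "countable (carrier G)"
    and "1 < p" and "p \<noteq> 2"
    and "property_T_lp G p"
  shows "property_tau G"
proof (rule ccontr)
  assume "\<not> property_tau G"
  define S where "S k = from_nat_into (carrier G) ` {..<k}" for k
  define \<delta> where "\<delta> k = inverse (real (Suc k))" for k
  have "carrier G \<noteq> {}" using group.is_monoid[OF assms(1)] monoid.one_closed by blast
  then have S: "finite (S k)" "S k \<subseteq> carrier G" for k
    unfolding S_def by (auto intro: from_nat_into)
  have "\<forall>k. \<exists>H\<in>finite_index_subgroups G. \<exists>B.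
      small_boundary_set (\<lambda>g c. inv\<^bsub>G\<^esub> g <#\<^bsub>G\<^esub> c) (S k) (lcosets G H) (\<delta> k) B"
    using not_property_tau_small_boundary[OF assms(1) \<open>\<not> property_tau G\<close> S] by (simp add: \<delta>_def)
  then obtain H B where HB: "\<And>k. H k \<in> finite_index_subgroups G"
    "\<And>k. small_boundary_set (\<lambda>g c. inv\<^bsub>G\<^esub> g <#\<^bsub>G\<^esub> c) (S k) (lcosets G (H k)) (\<delta> k) (B k)"
    by metis
  have \<delta>: "\<delta> \<longlonglongrightarrow> 0" unfolding \<delta>_def by (rule LIMSEQ_inverse_real_of_nat)
  have exhausting: "\<forall>\<^sub>F k in sequentially. g \<in> S k" if "g \<in> carrier G" for g
    unfolding eventually_sequentially
  proof (intro exI allI impI)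
    fix k assume "Suc (to_nat_on (carrier G) g) \<le> k"
    then show "g \<in> S k" using that assms(2) unfolding S_def by (intro image_eqI[where x = "to_nat_on (carrier G) g"]) auto
  qed
  have "p > 0" using assms(3) by simp
  from not_property_T_lp_of_small_boundary_sets[OF assms(1) this HB S(1) \<delta> exhausting]
    and assms(5) show False by contradiction
qed

end
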